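(* For the randomized implicit RK2 schemes (S1) and (S2), asymptotic stability and stability in probability are equivalent, and $$\mathcal{R}_{AS}=\mathcal{R}_{SP}=\Bigl\{z\in\mathbb{C}: \mathbb{E}\Bigl(\log\Bigl|1+\frac{z}{1-z\tau_1}\Bigr|\Bigr)<0\Bigr\}=\mathbb{C}_-.$$ In particular both schemes are A-stable in the asymptotic sense and in the sense of stability in probability.
   Context: Let $\tau_1,\tau_2,\ldots$ be independent random variables uniformly distributed on $[0,1]$. Applying either of the randomized implicit RK2 schemes (S1) or (S2) with step $h>0$ to Dahlquist's test equation $z'(t)=\lambda z(t)$, $z(0)=1$, $\lambda\in\mathbb{C}$, gives, with $z=\lambda h$, $V^k=\prod_{j=1}^k\bigl(1+\frac{z}{1-z\tau_j}\bigr)$, $k\ge0$ (almost surely well defined). The asymptotic stability region is $\mathcal{R}_{AS}=\{z\in\mathbb{C}: V^k\to0 \text{ almost surely as } k\to\infty\}$ and the region of stability in probability is $\mathcal{R}_{SP}=\{z\in\mathbb{C}: V^k\to0 \text{ in probability as } k\to\infty\}$. $\mathbb{C}_-=\{z\in\mathbb{C}:\Re(z)<0\}$. *)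

theory Defs
  imports "HOL-Probability.Probability"
begin

definition V :: "(nat \<Rightarrow> 'a \<Rightarrow> real) \<Rightarrow> complex \<Rightarrow> nat \<Rightarrow> 'a \<Rightarrow> complex" where
  "V \<tau> z k \<omega> = (\<Prod>j\<in>{1..k}. 1 + z / (1 - z * complex_of_real (\<tau> j \<omega>)))"

definition R_AS :: "'a measure \<Rightarrow> (nat \<Rightarrow> 'a \<Rightarrow> real) \<Rightarrow> complex set" where
  "R_AS M \<tau> = {z. AE \<omega> in M. (\<lambda>k. V \<tau> z k \<omega>) \<longlonglongrightarrow> 0}"

definition R_SP :: "'a measure \<Rightarrow> (nat \<Rightarrow> 'a \<Rightarrow> real) \<Rightarrow> complex set" where
  "R_SP M \<tau> = {z. \<forall>e>0. (\<lambda>k. measure M {\<omega> \<in> space M. e < cmod (V \<tau> z k \<omega>)}) \<longlonglongrightarrow> 0}"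

end

theory Submission
  imports Defs "HOL-Real_Asymp.Real_Asymp"
begin

text \<open>
  Write \<open>f(u) = 1 + z / (1 - z u) = (1 + z (1 - u)) / (1 - z u)\<close>, so that \<open>V\<^sup>k = \<Prod>\<^sub>j f(\<tau>\<^sub>j)\<close>.
  Since \<open>\<tau>\<close> and \<open>1 - \<tau>\<close> have the same law, pairing \<open>u\<close> with \<open>1 - u\<close> gives
  \<open>E ln |f(\<tau>)| = E (ln |1 + z \<tau>| - ln |1 - z \<tau>|)\<close>, and \<open>|1 + w|\<^sup>2 - |1 - w|\<^sup>2 = 4 Re w\<close>;
  hence \<open>E ln |f(\<tau>)| < 0\<close> exactly when \<open>Re z < 0\<close>.

  If \<open>Re z < 0\<close>, the negative mean logarithm yields a fractional moment \<open>m = E |f(\<tau>)|\<^sup>s < 1\<close>;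
  by independence \<open>E |V\<^sup>k|\<^sup>s = m\<^sup>k\<close>, and Markov's inequality with Borel-Cantelli gives
  \<open>V\<^sup>k \<rightarrow> 0\<close> almost surely, hence also in probability.
  If \<open>Re z \<ge> 0\<close>, then \<open>|f(u)| \<ge> g(u) = \<surd>(1 + |z|\<^sup>2 (1 - u)\<^sup>2) / \<surd>(1 + |z|\<^sup>2 u\<^sup>2)\<close> with
  \<open>g(1 - u) = 1 / g(u)\<close>. The product \<open>G = \<Prod>\<^sub>j g(\<tau>\<^sub>j)\<close> therefore has the same law as \<open>1 / G\<close>,
  so \<open>P(|V\<^sup>k| > 1/2) \<ge> P(G \<ge> 1) \<ge> 1/2\<close> for every \<open>k\<close>, and \<open>V\<^sup>k\<close> does not tend to \<open>0\<close>
  even in probability.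
\<close>

lemma (in prob_space) tendsto_prob_norm_gt_if_AE_tendsto_zero:
  fixes f :: "nat \<Rightarrow> 'a \<Rightarrow> 'b::real_normed_vector"
  assumes [measurable]: "\<And>k. f k \<in> borel_measurable M"
    and lim: "AE \<omega> in M. (\<lambda>k. f k \<omega>) \<longlonglongrightarrow> 0" and e: "0 < e"
  shows "(\<lambda>k. prob {\<omega> \<in> space M. e < norm (f k \<omega>)}) \<longlonglongrightarrow> 0"
proof -
  define A where "A k = {\<omega> \<in> space M. e < norm (f k \<omega>)}" for k
  have A[measurable]: "A k \<in> events" for k
    unfolding A_def by measurable
  have "(\<lambda>k. \<integral>\<omega>. indicator (A k) \<omega> \<partial>M) \<longlonglongrightarrow> (\<integral>\<omega>. 0 \<partial>M :: real)"
  proof (rule integral_dominated_convergence[where w="\<lambda>_. 1"])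
    show "AE \<omega> in M. (\<lambda>k. indicator (A k) \<omega> :: real) \<longlonglongrightarrow> 0"
      using lim
    proof eventually_elim
      case (elim \<omega>)
      have "\<forall>\<^sub>F k in sequentially. norm (f k \<omega>) < e"
        by (rule order_tendstoD(2)[OF tendsto_norm_zero[OF elim] e])
      then show ?case
        by (rule tendsto_eventually[OF eventually_mono]) (auto simp: A_def)
    qed
  qed auto
  then show ?thesis
    by (simp add: A_def)
qed

lemma (in prob_space) AE_tendsto_zero_if_expectation_geometric:
  fixes Y :: "nat \<Rightarrow> 'a \<Rightarrow> real"
  assumes [measurable]: "\<And>k. Y k \<in> borel_measurable M"
    and int: "\<And>k. integrable M (Y k)"
    and nonneg: "\<And>k \<omega>. 0 \<le> Y k \<omega>"
    and bound: "\<And>k. expectation (Y k) \<le> m ^ k" and m: "0 \<le> m" "m < 1"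
  shows "AE \<omega> in M. (\<lambda>k. Y k \<omega>) \<longlonglongrightarrow> 0"
proof -
  define r where "r = (1 + m) / 2"
  have r: "0 < r" "r < 1" "m < r"
    using m by (auto simp: r_def)
  define A where "A k = {\<omega> \<in> space M. r ^ k \<le> Y k \<omega>}" for k
  have A[measurable]: "A k \<in> events" for k
    unfolding A_def by measurable
  have "prob (A k) \<le> (m / r) ^ k" for k
  proof -
    have "prob (A k) \<le> expectation (Y k) / r ^ k"
      unfolding A_def using r by (intro integral_Markov_inequality_measure[OF int]) (auto simp: nonneg)
    also have "\<dots> \<le> (m / r) ^ k"
      using bound r by (simp add: divide_right_mono power_divide)
    finally show ?thesis .
  qed
  then have "summable (\<lambda>k. prob (A k))"
    using m r by (intro summable_comparison_test'[OF summable_geometric, of "m / r"]) auto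
  then have "AE \<omega> in M. \<forall>\<^sub>F k in sequentially. \<omega> \<in> space M - A k"
    by (intro borel_cantelli_AE1) (auto simp: emeasure_eq_measure)
  then show ?thesis
  proof eventually_elim
    case (elim \<omega>)
    show ?case
    proof (rule tendsto_sandwich[of "\<lambda>_. 0" _ _ "\<lambda>k. r ^ k"])
      show "\<forall>\<^sub>F k in sequentially. Y k \<omega> \<le> r ^ k"
        using elim by (rule eventually_mono) (auto simp: A_def)
      show "(\<lambda>k. r ^ k) \<longlonglongrightarrow> 0"
        using r by (intro LIMSEQ_power_zero) auto
    qed (auto simp: nonneg)
  qed
qed

lemma (in prob_space) prob_ge_one_ge_half_if_inverse_same_law:
  fixes G :: "'a \<Rightarrow> real"
  assumes [measurable]: "G \<in> borel_measurable M"
    and law: "distr M borel G = distr M borel (\<lambda>\<omega>. inverse (G \<omega>))"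
    and pos: "\<And>\<omega>. 0 < G \<omega>"
  shows "1 / 2 \<le> prob {\<omega> \<in> space M. 1 \<le> G \<omega>}"
proof -
  have "prob {\<omega> \<in> space M. 1 \<le> G \<omega>} = measure (distr M borel G) {1..}"
    by (subst measure_distr) (auto intro!: arg_cong[where f=prob])
  also have "\<dots> = measure (distr M borel (\<lambda>\<omega>. inverse (G \<omega>))) {1..}"
    by (simp only: law)
  also have "\<dots> = prob {\<omega> \<in> space M. G \<omega> \<le> 1}"
    using pos by (subst measure_distr) (auto intro!: arg_cong[where f=prob] simp: one_le_inverse_iff)
  finally have "prob {\<omega> \<in> space M. 1 \<le> G \<omega>} = prob {\<omega> \<in> space M. G \<omega> \<le> 1}" .
  moreover have "1 \<le> prob {\<omega> \<in> space M. 1 \<le> G \<omega>} + prob {\<omega> \<in> space M. G \<omega> \<le> 1}"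
  proof -
    have "1 = prob ({\<omega> \<in> space M. 1 \<le> G \<omega>} \<union> {\<omega> \<in> space M. G \<omega> \<le> 1})"
      by (subst prob_space[symmetric]) (auto intro!: arg_cong[where f=prob])
    also have "\<dots> \<le> prob {\<omega> \<in> space M. 1 \<le> G \<omega>} + prob {\<omega> \<in> space M. G \<omega> \<le> 1}"
      by (intro measure_Un_le) measurable
    finally show ?thesis .
  qed
  ultimately show ?thesis
    by linarith
qed

lemma powr_diff_quotient_bounds:
  fixes x s :: real
  assumes "0 < x" "0 < s" "s \<le> 1"
  shows "ln x \<le> (x powr s - 1) / s" and "(x powr s - 1) / s \<le> x - 1"
proof -
  have "s * ln x \<le> x powr s - 1"
    using ln_le_minus_one[of "x powr s"] assms by (simp add: ln_powr)
  then show "ln x \<le> (x powr s - 1) / s"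
    using assms by (simp add: pos_le_divide_eq mult.commute)
  have "x powr s * 1 powr (1 - s) \<le> s * x + (1 - s) * 1"
    using assms by (intro Youngs_inequality_0) auto
  then show "(x powr s - 1) / s \<le> x - 1"
    using assms by (simp add: pos_divide_le_eq) (simp add: algebra_simps)
qed

text \<open>The quotient \<open>(x powr s - 1) / s\<close> tends to \<open>ln x\<close> as \<open>s \<rightarrow> 0\<close>, so by the bounds above
  dominated convergence carries \<open>E ln X < 0\<close> over to \<open>E X powr s < 1\<close> for small \<open>s\<close>.\<close>

lemma (in prob_space) expectation_powr_less_one_if_expectation_ln_neg:
  fixes X :: "'a \<Rightarrow> real"
  assumes [measurable]: "X \<in> borel_measurable M"
    and pos: "AE \<omega> in M. 0 < X \<omega>" and int: "integrable M X"
    and int_ln: "integrable M (\<lambda>\<omega>. ln (X \<omega>))" and neg: "expectation (\<lambda>\<omega>. ln (X \<omega>)) < 0"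
  shows "\<exists>s>0. expectation (\<lambda>\<omega>. X \<omega> powr s) < 1"
proof -
  define s :: "nat \<Rightarrow> real" where "s n = 1 / Suc n" for n
  have s: "0 < s n" "s n \<le> 1" for n
    by (auto simp: s_def)
  define D where "D n \<omega> = (X \<omega> powr s n - 1) / s n" for n \<omega>
  have [measurable]: "D n \<in> borel_measurable M" for n
    unfolding D_def by measurable
  have D_abs: "\<bar>D n \<omega>\<bar> \<le> \<bar>ln (X \<omega>)\<bar> + \<bar>X \<omega> - 1\<bar>" if "0 < X \<omega>" for n \<omega>
    using powr_diff_quotient_bounds[OF that s(1,2)[of n]] unfolding D_def by linarith
  have int_D: "integrable M (D n)" for n
  proof (rule Bochner_Integration.integrable_bound)
    show "integrable M (\<lambda>\<omega>. \<bar>ln (X \<omega>)\<bar> + \<bar>X \<omega> - 1\<bar>)"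
      using int int_ln by auto
    show "AE \<omega> in M. norm (D n \<omega>) \<le> norm (\<bar>ln (X \<omega>)\<bar> + \<bar>X \<omega> - 1\<bar>)"
      using pos by eventually_elim (simp add: D_abs)
  qed simp
  have "(\<lambda>n. expectation (D n)) \<longlonglongrightarrow> expectation (\<lambda>\<omega>. ln (X \<omega>))"
  proof (rule integral_dominated_convergence[where w="\<lambda>\<omega>. \<bar>ln (X \<omega>)\<bar> + \<bar>X \<omega> - 1\<bar>"])
    show "AE \<omega> in M. (\<lambda>n. D n \<omega>) \<longlonglongrightarrow> ln (X \<omega>)"
      using pos by eventually_elim (simp add: D_def s_def, real_asymp)
    show "AE \<omega> in M. norm (D n \<omega>) \<le> \<bar>ln (X \<omega>)\<bar> + \<bar>X \<omega> - 1\<bar>" for n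
      using pos by eventually_elim (simp add: D_abs)
  qed (use int int_ln in auto)
  then obtain n where "expectation (D n) < 0"
    using neg by (metis order_tendstoD(2) eventually_sequentially order_refl)
  moreover have "expectation (\<lambda>\<omega>. X \<omega> powr s n) = 1 + s n * expectation (D n)"
  proof -
    have "expectation (\<lambda>\<omega>. X \<omega> powr s n) = expectation (\<lambda>\<omega>. 1 + s n * D n \<omega>)"
      using s[of n] by (intro Bochner_Integration.integral_cong) (auto simp: D_def)
    also have "\<dots> = 1 + s n * expectation (D n)"
      using int_D by (simp add: prob_space)
    finally show ?thesis .
  qed
  ultimately show ?thesis
    using s by (intro exI[of _ "s n"]) (auto simp: mult_pos_neg)
qed

lemma (in prob_space) distr_PiM_eq_if_indep_vars_same_laws:
  assumes "I \<noteq> {}"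
    and indep: "indep_vars M' X I" "indep_vars M' Y I"
    and rv: "\<And>i. i \<in> I \<Longrightarrow> random_variable (M' i) (X i)" "\<And>i. i \<in> I \<Longrightarrow> random_variable (M' i) (Y i)"
    and law: "\<And>i. i \<in> I \<Longrightarrow> distr M (M' i) (X i) = distr M (M' i) (Y i)"
  shows "distr M (\<Pi>\<^sub>M i\<in>I. M' i) (\<lambda>\<omega>. \<lambda>i\<in>I. X i \<omega>) = distr M (\<Pi>\<^sub>M i\<in>I. M' i) (\<lambda>\<omega>. \<lambda>i\<in>I. Y i \<omega>)"
  using indep rv law
  by (simp add: indep_vars_iff_distr_eq_PiM'[OF \<open>I \<noteq> {}\<close>] cong: PiM_cong)

lemma distr_lborel_eq_distr_borel:
  assumes "f \<in> borel_measurable M"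
  shows "distr M lborel f = distr M borel f"
  using assms by (intro measure_eqI) (auto simp: emeasure_distr)

section \<open>Integrability of the logarithm at zero\<close>

lemma continuous_on_x_minus_x_ln_x: "continuous_on {0..1::real} (\<lambda>x. x - x * ln x)"
  unfolding continuous_on_eq_continuous_within
proof
  fix x :: real assume "x \<in> {0..1}"
  show "continuous (at x within {0..1}) (\<lambda>x. x - x * ln x)"
  proof (cases "x = 0")
    case True
    have "((\<lambda>x::real. x - x * ln x) \<longlongrightarrow> 0) (at_right 0)"
      by real_asymp
    then have "((\<lambda>x::real. x - x * ln x) \<longlongrightarrow> 0) (at 0 within {0..1})"
      by (simp add: at_within_Icc_at_right)
    then show ?thesis
      using True by (simp add: continuous_within)
  next
    case False
    then show ?thesis
      using \<open>x \<in> {0..1}\<close> by (intro continuous_intros) auto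
  qed
qed

lemma set_integrable_neg_ln: "set_integrable lborel {0..1::real} (\<lambda>x. - ln x)"
proof -
  have "((\<lambda>x. - ln x) has_integral (1 - 1 * ln 1) - (0 - 0 * ln 0)) {0..1::real}"
  proof (rule fundamental_theorem_of_calculus_interior)
    fix x :: real assume "x \<in> {0<..<1}"
    then show "((\<lambda>x. x - x * ln x) has_vector_derivative - ln x) (at x)"
      unfolding has_real_derivative_iff_has_vector_derivative[symmetric]
      by (auto intro!: derivative_eq_intros)
  qed (auto intro: continuous_on_x_minus_x_ln_x)
  then have "(\<lambda>x::real. - ln x) absolutely_integrable_on {0..1}"
    by (intro nonnegative_absolutely_integrable_1) (auto simp: ln_le_zero_iff le_less)
  then show ?thesis
    unfolding set_integrable_def by (subst integrable_completion[symmetric]) auto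
qed

lemma integrable_ln_abs_neg_part: "integrable lborel (\<lambda>w::real. max 0 (- ln \<bar>w\<bar>))"
proof -
  define f where "f w = indicator {0..1::real} w * (- ln w)" for w
  have f: "integrable lborel f"
    using set_integrable_neg_ln unfolding set_integrable_def f_def by (simp add: mult.commute)
  have "max 0 (- ln \<bar>w\<bar>) = f w + f (0 + (-1) * w)" for w
    by (cases "w < -1" "w < 0" "w \<le> 1" rule: bool.exhaust[case_product bool.exhaust bool.exhaust])
      (auto simp: f_def indicator_def ln_le_zero_iff)
  then show ?thesis
    using f lborel_integrable_real_affine[OF f, of "-1" 0] by simp
qed

section \<open>The uniform distribution on the unit interval\<close>

abbreviation uniform01 :: "real measure" where
  "uniform01 \<equiv> uniform_measure lborel {0..1}"

interpretation uniform01: prob_space uniform01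
  by (rule prob_space_uniform_measure) auto

lemma uniform01_eq_density: "uniform01 = density lborel (\<lambda>x. ennreal (indicator {0..1} x))"
  unfolding uniform_measure_def
  by (auto intro!: arg_cong[where f="density lborel"] simp: indicator_def)

lemma integrable_uniform01_if_integrable_lborel:
  fixes g :: "real \<Rightarrow> real"
  assumes "integrable lborel g"
  shows "integrable uniform01 g"
  using integrable_real_mult_indicator[OF _ assms, of "{0..1}"] assms
  unfolding uniform01_eq_density by (subst integrable_density) (auto simp: mult.commute)

lemma distr_uniform01_reflect: "distr uniform01 borel (\<lambda>u. 1 - u) = uniform01"
proof (rule measure_eqI)
  fix A assume "A \<in> sets (distr uniform01 borel (\<lambda>u. 1 - u))"
  then have [measurable]: "A \<in> sets borel"
    by simp
  have [measurable]: "(\<lambda>u::real. 1 - u) -` A \<in> sets borel"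
    using measurable_sets[of "\<lambda>u::real. 1 - u" borel borel A] by simp
  have "emeasure lborel ({0..1} \<inter> A) = (\<integral>\<^sup>+x. indicator ({0..1} \<inter> A) x \<partial>lborel)"
    by simp
  also have "\<dots> = (\<integral>\<^sup>+x. indicator ({0..1} \<inter> A) (1 + (-1) * x) \<partial>lborel)"
    by (subst nn_integral_real_affine[where c="-1" and t=1]) auto
  also have "\<dots> = (\<integral>\<^sup>+x. indicator ({0..1} \<inter> (\<lambda>u. 1 - u) -` A) x \<partial>lborel)"
    by (intro nn_integral_cong) (auto simp: indicator_def)
  also have "\<dots> = emeasure lborel ({0..1} \<inter> (\<lambda>u::real. 1 - u) -` A)"
    by simp
  finally show "emeasure (distr uniform01 borel (\<lambda>u. 1 - u)) A = emeasure uniform01 A"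
    by (simp add: emeasure_distr)
qed simp

lemma AE_uniform01_reflect:
  assumes "AE u in uniform01. P u" and [measurable]: "Measurable.pred borel P"
  shows "AE u in uniform01. P (1 - u)"
  using assms(1) by (subst (asm) distr_uniform01_reflect[symmetric]) (simp add: AE_distr_iff)

lemma integral_uniform01_reflect:
  fixes g :: "real \<Rightarrow> real"
  assumes [measurable]: "g \<in> borel_measurable borel"
  shows "integral\<^sup>L uniform01 (\<lambda>u. g (1 - u)) = integral\<^sup>L uniform01 g"
    and "integrable uniform01 (\<lambda>u. g (1 - u)) \<longleftrightarrow> integrable uniform01 g"
  using integral_distr[of "\<lambda>u. 1 - u" uniform01 borel g]
    integrable_distr_eq[of "\<lambda>u. 1 - u" uniform01 borel g]
  by (simp_all add: distr_uniform01_reflect)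

lemma integral_uniform01_symmetrize:
  fixes g :: "real \<Rightarrow> real"
  assumes "integrable uniform01 g"
  shows "2 * integral\<^sup>L uniform01 g = integral\<^sup>L uniform01 (\<lambda>u. g u + g (1 - u))"
proof -
  have [measurable]: "g \<in> borel_measurable borel"
    using borel_measurable_integrable[OF assms] by simp
  show ?thesis
    using assms integral_uniform01_reflect[of g] by simp
qed

lemma AE_uniform01_if_AE_lborel: "AE u in lborel. P u \<Longrightarrow> AE u in uniform01. P u"
  by (intro AE_uniform_measureI) (auto elim!: eventually_mono)

lemma AE_uniform01_interior: "AE u in uniform01. 0 < u \<and> u < 1"
proof -
  have "AE u in uniform01. u \<noteq> 0" "AE u in uniform01. u \<noteq> 1"
    by (auto intro!: AE_uniform01_if_AE_lborel AE_lborel_singleton)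
  moreover have "AE u in uniform01. 0 \<le> u \<and> u \<le> 1"
    by (rule AE_uniform_measureI) auto
  ultimately show ?thesis
    by eventually_elim auto
qed

lemma AE_uniform01_one_add_ne_zero: "AE u in uniform01. 1 + w * complex_of_real u \<noteq> 0"
proof -
  define c where "c = Re (- 1 / w)"
  have ne: "1 + w * complex_of_real u \<noteq> 0" if "u \<noteq> c" for u
  proof
    assume eq: "1 + w * complex_of_real u = 0"
    then have "w \<noteq> 0"
      by auto
    with eq have "complex_of_real u = - 1 / w"
      by (simp add: field_simps add_eq_0_iff)
    then show False
      using that unfolding c_def by (metis Re_complex_of_real)
  qed
  have "AE u in lborel. 1 + w * complex_of_real u \<noteq> 0"
    using AE_lborel_singleton[of c] by eventually_elim (rule ne)
  then show ?thesis
    by (rule AE_uniform01_if_AE_lborel)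
qed

lemma AE_uniform01_ne_zero:
  "AE u in uniform01. 1 + z * complex_of_real u \<noteq> 0 \<and> 1 - z * complex_of_real u \<noteq> 0 \<and>
     1 + z * complex_of_real (1 - u) \<noteq> 0 \<and> 1 - z * complex_of_real (1 - u) \<noteq> 0"
proof -
  have plus: "AE u in uniform01. 1 + z * complex_of_real u \<noteq> 0"
    and minus: "AE u in uniform01. 1 - z * complex_of_real u \<noteq> 0"
    using AE_uniform01_one_add_ne_zero[of z] AE_uniform01_one_add_ne_zero[of "- z"] by simp_all
  moreover have "AE u in uniform01. 1 + z * complex_of_real (1 - u) \<noteq> 0"
    by (rule AE_uniform01_reflect[OF plus]) measurable
  moreover have "AE u in uniform01. 1 - z * complex_of_real (1 - u) \<noteq> 0"
    by (rule AE_uniform01_reflect[OF minus]) measurable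
  ultimately show ?thesis
    by eventually_elim blast
qed

section \<open>The stability factor\<close>

definition stab_factor :: "complex \<Rightarrow> real \<Rightarrow> complex" where
  "stab_factor z u = 1 + z / (1 - z * complex_of_real u)"

definition log_gain :: "complex \<Rightarrow> real \<Rightarrow> real" where
  "log_gain z u = ln (cmod (stab_factor z u))"

lemma stab_factor_measurable [measurable]: "stab_factor z \<in> borel_measurable borel"
  unfolding stab_factor_def by measurable

lemma log_gain_measurable [measurable]: "log_gain z \<in> borel_measurable borel"
  unfolding log_gain_def by measurable

lemma stab_factor_eq:
  assumes "1 - z * complex_of_real u \<noteq> 0"
  shows "stab_factor z u = (1 + z * complex_of_real (1 - u)) / (1 - z * complex_of_real u)"
  using assms unfolding stab_factor_def by (simp add: field_simps)

lemma V_eq_prod_stab_factor: "V \<tau> z k = (\<lambda>\<omega>. \<Prod>j\<in>{1..k}. stab_factor z (\<tau> j \<omega>))"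
  unfolding V_def stab_factor_def ..

lemma log_gain_eq:
  assumes "1 - z * complex_of_real u \<noteq> 0" "1 + z * complex_of_real (1 - u) \<noteq> 0"
  shows "log_gain z u = ln (cmod (1 + z * complex_of_real (1 - u))) - ln (cmod (1 - z * complex_of_real u))"
  using assms unfolding log_gain_def stab_factor_eq[OF assms(1)]
  by (simp add: norm_divide ln_div del: of_real_diff)

lemma log_gain_add_reflect:
  assumes "1 - z * complex_of_real u \<noteq> 0" "1 - z * complex_of_real (1 - u) \<noteq> 0"
    and "1 + z * complex_of_real u \<noteq> 0" "1 + z * complex_of_real (1 - u) \<noteq> 0"
  shows "log_gain z u + log_gain z (1 - u) =
    (ln (cmod (1 + z * complex_of_real u)) - ln (cmod (1 - z * complex_of_real u))) +
    (ln (cmod (1 + z * complex_of_real (1 - u))) - ln (cmod (1 - z * complex_of_real (1 - u))))"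
  using log_gain_eq[of z u] log_gain_eq[of z "1 - u"] assms by (simp del: of_real_diff)

lemma cmod_one_add_mult_of_real_sq:
  "(cmod (1 + z * complex_of_real v))\<^sup>2 = 1 + 2 * Re z * v + (cmod z)\<^sup>2 * v\<^sup>2"
  by (simp only: cmod_power2) (simp add: power2_eq_square algebra_simps)

lemma cmod_one_add_le_cmod_one_diff_iff: "cmod (1 + w) \<le> cmod (1 - w) \<longleftrightarrow> Re w \<le> 0"
proof -
  have "(cmod (1 + w))\<^sup>2 = (cmod (1 - w))\<^sup>2 + 4 * Re w"
    using cmod_one_add_mult_of_real_sq[of w 1] cmod_one_add_mult_of_real_sq[of "- w" 1] by simp
  then show ?thesis
    by (smt (verit) norm_ge_zero power_mono power2_le_imp_le)
qed

lemma cmod_one_add_less_cmod_one_diff_iff: "cmod (1 + w) < cmod (1 - w) \<longleftrightarrow> Re w < 0"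
  using cmod_one_add_le_cmod_one_diff_iff[of "- w"] by (simp add: not_le[symmetric])

lemma ln_cmod_one_diff_le_ln_cmod_one_add:
  assumes "0 \<le> Re z" "0 \<le> v" "1 - z * complex_of_real v \<noteq> 0"
  shows "ln (cmod (1 - z * complex_of_real v)) \<le> ln (cmod (1 + z * complex_of_real v))"
proof -
  have "cmod (1 - z * complex_of_real v) \<le> cmod (1 + z * complex_of_real v)"
    using assms cmod_one_add_le_cmod_one_diff_iff[of "- z * complex_of_real v"] by simp
  then show ?thesis
    using assms(3) by (intro ln_mono) auto
qed

lemma ln_cmod_one_add_less_ln_cmod_one_diff:
  assumes "Re z < 0" "0 < v" "1 + z * complex_of_real v \<noteq> 0"
  shows "ln (cmod (1 + z * complex_of_real v)) < ln (cmod (1 - z * complex_of_real v))"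
proof -
  have "cmod (1 + z * complex_of_real v) < cmod (1 - z * complex_of_real v)"
    using assms cmod_one_add_less_cmod_one_diff_iff[of "z * complex_of_real v"]
    by (simp add: mult_neg_pos)
  then show ?thesis
    using assms(3) by (intro ln_strict_mono) auto
qed

lemma one_le_cmod_one_diff:
  assumes "Re z \<le> 0" "0 \<le> u"
  shows "1 \<le> cmod (1 - z * complex_of_real u)"
proof -
  have "1 \<le> Re (1 - z * complex_of_real u)"
    using assms by (simp add: mult_nonpos_nonneg)
  also have "\<dots> \<le> cmod (1 - z * complex_of_real u)"
    by (rule complex_Re_le_cmod)
  finally show ?thesis .
qed

lemma cmod_one_add_le:
  assumes "0 \<le> v" "v \<le> 1"
  shows "cmod (1 + z * complex_of_real v) \<le> 1 + cmod z"
proof -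
  have "cmod (1 + z * complex_of_real v) \<le> 1 + cmod z * v"
    using norm_triangle_ineq[of 1 "z * complex_of_real v"] assms by (simp add: norm_mult)
  also have "\<dots> \<le> 1 + cmod z"
    using assms by (simp add: mult_left_le)
  finally show ?thesis .
qed

lemma cmod_stab_factor_le:
  assumes "Re z \<le> 0" "0 \<le> u" "u \<le> 1"
  shows "cmod (stab_factor z u) \<le> 1 + cmod z"
proof -
  have B: "1 \<le> cmod (1 - z * complex_of_real u)"
    using one_le_cmod_one_diff assms by blast
  then have "cmod (stab_factor z u) \<le> cmod (1 + z * complex_of_real (1 - u))"
    by (subst stab_factor_eq)
      (auto simp: norm_divide divide_le_eq mult_le_cancel_left1 simp del: of_real_diff)
  also have "\<dots> \<le> 1 + cmod z"
    using cmod_one_add_le[of "1 - u" z] assms by simp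
  finally show ?thesis .
qed

lemma abs_log_gain_le:
  assumes "Re z \<le> 0" "0 \<le> u" "u \<le> 1" "1 + Re z * (1 - u) \<noteq> 0"
  shows "\<bar>log_gain z u\<bar> \<le> 2 * ln (1 + cmod z) + max 0 (- ln \<bar>1 + Re z * (1 - u)\<bar>)"
proof -
  define A where "A = 1 + z * complex_of_real (1 - u)"
  define B where "B = 1 - z * complex_of_real u"
  have lower: "\<bar>1 + Re z * (1 - u)\<bar> \<le> cmod A"
    using abs_Re_le_cmod[of A] by (simp add: A_def)
  have upper: "cmod A \<le> 1 + cmod z"
    using cmod_one_add_le[of "1 - u" z] assms by (simp add: A_def)
  have pos: "0 < \<bar>1 + Re z * (1 - u)\<bar>"
    using assms(4) by simp
  have "ln \<bar>1 + Re z * (1 - u)\<bar> \<le> ln (cmod A)" "ln (cmod A) \<le> ln (1 + cmod z)"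
    using lower upper pos by (auto intro!: ln_mono)
  then have A: "- max 0 (- ln \<bar>1 + Re z * (1 - u)\<bar>) \<le> ln (cmod A)" "ln (cmod A) \<le> ln (1 + cmod z)"
    by auto
  have "1 \<le> cmod B" "cmod B \<le> 1 + cmod z"
    using one_le_cmod_one_diff[of z u] cmod_one_add_le[of u "- z"] assms by (auto simp: B_def)
  then have B: "0 \<le> ln (cmod B)" "ln (cmod B) \<le> ln (1 + cmod z)"
    by (auto intro!: ln_mono)
  have "A \<noteq> 0" "B \<noteq> 0"
    using \<open>1 \<le> cmod B\<close> lower pos by auto
  then have "log_gain z u = ln (cmod A) - ln (cmod B)"
    by (simp add: A_def B_def log_gain_eq)
  then show ?thesis
    using A B by linarith
qed

definition gain_minorant :: "complex \<Rightarrow> real \<Rightarrow> real" where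
  "gain_minorant z u = sqrt (1 + (cmod z)\<^sup>2 * (1 - u)\<^sup>2) / sqrt (1 + (cmod z)\<^sup>2 * u\<^sup>2)"

lemma gain_minorant_measurable [measurable]: "gain_minorant z \<in> borel_measurable borel"
  unfolding gain_minorant_def by measurable

lemma gain_minorant_pos: "0 < gain_minorant z u"
  unfolding gain_minorant_def by (intro divide_pos_pos) (auto intro: add_pos_nonneg)

lemma gain_minorant_reflect: "gain_minorant z (1 - u) = inverse (gain_minorant z u)"
  unfolding gain_minorant_def by simp

lemma gain_minorant_le_cmod_stab_factor:
  assumes "0 \<le> Re z" "0 \<le> u" "u \<le> 1" "1 - z * complex_of_real u \<noteq> 0"
  shows "gain_minorant z u \<le> cmod (stab_factor z u)"
proof -
  have "1 + (cmod z)\<^sup>2 * (1 - u)\<^sup>2 \<le> (cmod (1 + z * complex_of_real (1 - u)))\<^sup>2"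
    using cmod_one_add_mult_of_real_sq[of z "1 - u"] assms by simp
  then have A: "sqrt (1 + (cmod z)\<^sup>2 * (1 - u)\<^sup>2) \<le> cmod (1 + z * complex_of_real (1 - u))"
    by (simp add: real_le_lsqrt)
  have "(cmod (1 - z * complex_of_real u))\<^sup>2 \<le> 1 + (cmod z)\<^sup>2 * u\<^sup>2"
    using cmod_one_add_mult_of_real_sq[of "- z" u] assms by simp
  then have B: "cmod (1 - z * complex_of_real u) \<le> sqrt (1 + (cmod z)\<^sup>2 * u\<^sup>2)"
    by (simp add: real_le_rsqrt)
  show ?thesis
    unfolding gain_minorant_def stab_factor_eq[OF assms(4)] norm_divide
    using A B assms(4) by (intro frac_le) auto
qed

section \<open>The mean logarithmic gain\<close>

lemma AE_uniform01_log_gain_add_reflect: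
  "AE u in uniform01. 0 < u \<and> u < 1 \<and> log_gain z u + log_gain z (1 - u) =
    (ln (cmod (1 + z * complex_of_real u)) - ln (cmod (1 - z * complex_of_real u))) +
    (ln (cmod (1 + z * complex_of_real (1 - u))) - ln (cmod (1 - z * complex_of_real (1 - u))))"
  using AE_uniform01_interior AE_uniform01_ne_zero[of z]
  by eventually_elim (simp add: log_gain_add_reflect del: of_real_diff)

lemma integral_log_gain_nonneg:
  assumes "0 \<le> Re z"
  shows "0 \<le> integral\<^sup>L uniform01 (log_gain z)"
proof (cases "integrable uniform01 (log_gain z)")
  case True
  have "AE u in uniform01. 0 \<le> log_gain z u + log_gain z (1 - u)"
    using AE_uniform01_log_gain_add_reflect[of z] AE_uniform01_ne_zero[of z]
  proof eventually_elim
    case (elim u)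
    have "ln (cmod (1 - z * complex_of_real u)) \<le> ln (cmod (1 + z * complex_of_real u))"
      by (rule ln_cmod_one_diff_le_ln_cmod_one_add) (use elim assms in auto)
    moreover have "ln (cmod (1 - z * complex_of_real (1 - u))) \<le> ln (cmod (1 + z * complex_of_real (1 - u)))"
      by (rule ln_cmod_one_diff_le_ln_cmod_one_add) (use elim assms in auto)
    ultimately show ?case
      using elim by linarith
  qed
  then show ?thesis
    using integral_uniform01_symmetrize[OF True] integral_nonneg_AE by fastforce
qed (simp add: not_integrable_integral_eq)

lemma integrable_log_gain:
  assumes "Re z < 0"
  shows "integrable uniform01 (log_gain z)"
proof (rule Bochner_Integration.integrable_bound)
  define a where "a = Re z"
  have "integrable lborel (\<lambda>u. max 0 (- ln \<bar>(1 + a) + (- a) * u\<bar>))"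
    using assms by (intro lborel_integrable_real_affine integrable_ln_abs_neg_part) (simp add: a_def)
  then show "integrable uniform01 (\<lambda>u. 2 * ln (1 + cmod z) + max 0 (- ln \<bar>(1 + a) + (- a) * u\<bar>))"
    by (rule Bochner_Integration.integrable_add[OF uniform01.integrable_const
        integrable_uniform01_if_integrable_lborel])
  have "AE u in uniform01. 1 + complex_of_real a * complex_of_real (1 - u) \<noteq> 0"
    by (rule AE_uniform01_reflect[OF AE_uniform01_one_add_ne_zero]) measurable
  then have "AE u in uniform01. 1 + a * (1 - u) \<noteq> 0"
    by eventually_elim (metis of_real_1 of_real_add of_real_mult of_real_eq_0_iff)
  moreover have "AE u in uniform01. 0 \<le> u \<and> u \<le> 1"
    using AE_uniform01_interior by eventually_elim auto
  ultimately show "AE u in uniform01. norm (log_gain z u) \<le> norm (2 * ln (1 + cmod z) + max 0 (- ln \<bar>(1 + a) + (- a) * u\<bar>))"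
  proof eventually_elim
    case (elim u)
    then have "\<bar>log_gain z u\<bar> \<le> 2 * ln (1 + cmod z) + max 0 (- ln \<bar>(1 + a) + (- a) * u\<bar>)"
      using abs_log_gain_le[of z u] assms by (simp add: a_def algebra_simps)
    then show ?case
      by simp
  qed
qed simp

lemma integral_log_gain_neg:
  assumes "Re z < 0"
  shows "integral\<^sup>L uniform01 (log_gain z) < 0"
proof -
  have "AE u in uniform01. log_gain z u + log_gain z (1 - u) < 0"
    using AE_uniform01_log_gain_add_reflect[of z] AE_uniform01_ne_zero[of z]
  proof eventually_elim
    case (elim u)
    have "ln (cmod (1 + z * complex_of_real u)) < ln (cmod (1 - z * complex_of_real u))"
      by (rule ln_cmod_one_add_less_ln_cmod_one_diff) (use elim assms in auto)
    moreover have "ln (cmod (1 + z * complex_of_real (1 - u))) < ln (cmod (1 - z * complex_of_real (1 - u)))"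
      by (rule ln_cmod_one_add_less_ln_cmod_one_diff) (use elim assms in auto)
    ultimately show ?case
      using elim by linarith
  qed
  then have "integral\<^sup>L uniform01 (\<lambda>u. log_gain z u + log_gain z (1 - u)) < integral\<^sup>L uniform01 (\<lambda>_. 0)"
    using integrable_log_gain[OF assms] integral_uniform01_reflect(2)[of "log_gain z"]
    by (intro uniform01.integral_less_AE_space) auto
  then show ?thesis
    using integral_uniform01_symmetrize[OF integrable_log_gain[OF assms]] by simp
qed

lemma integral_log_gain_neg_iff: "integral\<^sup>L uniform01 (log_gain z) < 0 \<longleftrightarrow> Re z < 0"
  using integral_log_gain_neg[of z] integral_log_gain_nonneg[of z] by (cases "Re z < 0") auto

lemma AE_uniform01_cmod_stab_factor_le:
  assumes "Re z \<le> 0"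
  shows "AE u in uniform01. cmod (stab_factor z u) \<le> 1 + cmod z"
  using assms by (intro AE_uniform_measureI AE_I2) (auto intro: cmod_stab_factor_le)

lemma integrable_cmod_stab_factor_powr:
  assumes "Re z \<le> 0" "0 \<le> s"
  shows "integrable uniform01 (\<lambda>u. cmod (stab_factor z u) powr s)"
proof (rule uniform01.integrable_const_bound)
  show "AE u in uniform01. norm (cmod (stab_factor z u) powr s) \<le> (1 + cmod z) powr s"
    using AE_uniform01_cmod_stab_factor_le[OF assms(1)] by eventually_elim (simp add: assms(2) powr_mono2)
qed simp

lemma AE_uniform01_stab_factor_ne_zero: "AE u in uniform01. stab_factor z u \<noteq> 0"
  using AE_uniform01_ne_zero[of z]
  by eventually_elim (simp add: stab_factor_eq del: of_real_diff)

lemma exists_moment_stab_factor_less_one: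
  assumes "Re z < 0"
  shows "\<exists>s>0. integral\<^sup>L uniform01 (\<lambda>u. cmod (stab_factor z u) powr s) < 1"
proof (rule uniform01.expectation_powr_less_one_if_expectation_ln_neg)
  show "AE u in uniform01. 0 < cmod (stab_factor z u)"
    using AE_uniform01_stab_factor_ne_zero by eventually_elim simp
  show "integrable uniform01 (\<lambda>u. cmod (stab_factor z u))"
  proof (rule uniform01.integrable_const_bound)
    show "AE u in uniform01. norm (cmod (stab_factor z u)) \<le> 1 + cmod z"
      using AE_uniform01_cmod_stab_factor_le[of z] assms by simp
  qed simp
  show "integrable uniform01 (\<lambda>u. ln (cmod (stab_factor z u)))"
    unfolding log_gain_def[symmetric] by (rule integrable_log_gain[OF assms])
  show "integral\<^sup>L uniform01 (\<lambda>u. ln (cmod (stab_factor z u))) < 0"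
    unfolding log_gain_def[symmetric] by (rule integral_log_gain_neg[OF assms])
qed measurable

section \<open>Products of independent uniform factors\<close>

locale iid_uniform01 = prob_space M for M :: "'a measure" +
  fixes \<tau> :: "nat \<Rightarrow> 'a \<Rightarrow> real"
  assumes indep: "indep_vars (\<lambda>_. borel) \<tau> {1..}"
    and random_variable_tau: "\<And>j. 1 \<le> j \<Longrightarrow> random_variable borel (\<tau> j)"
    and distr_tau: "\<And>j. 1 \<le> j \<Longrightarrow> distr M borel (\<tau> j) = uniform01"
begin

lemma expectation_tau:
  fixes g :: "real \<Rightarrow> real"
  assumes "1 \<le> j" and [measurable]: "g \<in> borel_measurable borel"
  shows "expectation (\<lambda>\<omega>. g (\<tau> j \<omega>)) = integral\<^sup>L uniform01 g"
    and "integrable M (\<lambda>\<omega>. g (\<tau> j \<omega>)) \<longleftrightarrow> integrable uniform01 g"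
  using integral_distr[OF random_variable_tau[OF assms(1)], of g]
    integrable_distr_eq[OF random_variable_tau[OF assms(1)], of g]
  by (simp_all add: distr_tau[OF assms(1)])

lemma AE_tau:
  assumes "1 \<le> j" "AE u in uniform01. P u" and [measurable]: "Measurable.pred borel P"
  shows "AE \<omega> in M. P (\<tau> j \<omega>)"
  using assms(2) random_variable_tau[OF assms(1)]
  by (subst (asm) distr_tau[OF assms(1), symmetric]) (simp add: AE_distr_iff)

lemma V_measurable [measurable]: "V \<tau> z k \<in> borel_measurable M"
  unfolding V_eq_prod_stab_factor
  by (intro borel_measurable_prod measurable_compose[OF random_variable_tau stab_factor_measurable]) auto

lemma distr_prod_tau_reflect:
  fixes h :: "real \<Rightarrow> real"
  assumes I: "finite I" "I \<noteq> {}" "I \<subseteq> {1..}" and [measurable]: "h \<in> borel_measurable borel"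
  shows "distr M borel (\<lambda>\<omega>. \<Prod>j\<in>I. h (\<tau> j \<omega>)) = distr M borel (\<lambda>\<omega>. \<Prod>j\<in>I. h (1 - \<tau> j \<omega>))"
proof -
  let ?P = "\<Pi>\<^sub>M j\<in>I. (borel :: real measure)"
  have rv: "random_variable borel (\<tau> j)" if "j \<in> I" for j
    using random_variable_tau that I(3) by auto
  have indep_I: "indep_vars (\<lambda>_. borel) \<tau> I"
    using indep_vars_subset[OF indep I(3)] .
  define X where "X \<omega> = (\<lambda>j\<in>I. \<tau> j \<omega>)" for \<omega>
  define X' where "X' \<omega> = (\<lambda>j\<in>I. 1 - \<tau> j \<omega>)" for \<omega>
  define \<Phi> where "\<Phi> x = (\<Prod>j\<in>I. h (x j))" for x :: "nat \<Rightarrow> real"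
  have meas: "X \<in> measurable M ?P" "X' \<in> measurable M ?P" "\<Phi> \<in> borel_measurable ?P"
    using rv unfolding X_def X'_def \<Phi>_def by (auto intro!: measurable_restrict)
  have "distr M ?P X = distr M ?P X'"
    unfolding X_def X'_def
  proof (rule distr_PiM_eq_if_indep_vars_same_laws[OF I(2) indep_I])
    show "indep_vars (\<lambda>_. borel) (\<lambda>j \<omega>. 1 - \<tau> j \<omega>) I"
      by (rule indep_vars_compose2[OF indep_I]) auto
    fix j assume "j \<in> I"
    then have "distr M borel (\<lambda>\<omega>. 1 - \<tau> j \<omega>) = distr (distr M borel (\<tau> j)) borel (\<lambda>u. 1 - u)"
      using rv by (subst distr_distr) (auto simp: comp_def)
    then show "distr M borel (\<tau> j) = distr M borel (\<lambda>\<omega>. 1 - \<tau> j \<omega>)"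
      using \<open>j \<in> I\<close> I(3) by (auto simp: distr_tau distr_uniform01_reflect)
  qed (use rv in auto)
  then have "distr M borel (\<Phi> \<circ> X) = distr M borel (\<Phi> \<circ> X')"
    using meas by (simp flip: distr_distr)
  moreover have "\<Phi> \<circ> X = (\<lambda>\<omega>. \<Prod>j\<in>I. h (\<tau> j \<omega>))" "\<Phi> \<circ> X' = (\<lambda>\<omega>. \<Prod>j\<in>I. h (1 - \<tau> j \<omega>))"
    unfolding X_def X'_def \<Phi>_def by (auto simp: fun_eq_iff intro!: prod.cong)
  ultimately show ?thesis
    by simp
qed

lemma prob_cmod_V_gt_half_ge_half:
  assumes "0 \<le> Re z" "1 \<le> k"
  shows "1 / 2 \<le> prob {\<omega> \<in> space M. 1 / 2 < cmod (V \<tau> z k \<omega>)}"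
proof -
  define G where "G \<omega> = (\<Prod>j\<in>{1..k}. gain_minorant z (\<tau> j \<omega>))" for \<omega>
  have [measurable]: "G \<in> borel_measurable M"
    unfolding G_def
    by (intro borel_measurable_prod measurable_compose[OF random_variable_tau gain_minorant_measurable]) auto
  have "G = (\<lambda>\<omega>. \<Prod>j\<in>{1..k}. gain_minorant z (\<tau> j \<omega>))"
    "(\<lambda>\<omega>. inverse (G \<omega>)) = (\<lambda>\<omega>. \<Prod>j\<in>{1..k}. gain_minorant z (1 - \<tau> j \<omega>))"
    by (simp_all add: G_def gain_minorant_reflect comp_def fun_eq_iff flip: prod_inversef)
  then have law: "distr M borel G = distr M borel (\<lambda>\<omega>. inverse (G \<omega>))"
    using distr_prod_tau_reflect[of "{1..k}" "gain_minorant z"] assms(2) by simp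
  have "1 / 2 \<le> prob {\<omega> \<in> space M. 1 \<le> G \<omega>}"
    by (rule prob_ge_one_ge_half_if_inverse_same_law[OF _ law]) (auto simp: G_def gain_minorant_pos prod_pos)
  also have "\<dots> \<le> prob {\<omega> \<in> space M. 1 / 2 < cmod (V \<tau> z k \<omega>)}"
  proof (rule finite_measure_mono_AE)
    have "AE \<omega> in M. \<forall>j\<in>{1..k}. 0 \<le> \<tau> j \<omega> \<and> \<tau> j \<omega> \<le> 1 \<and> 1 - z * complex_of_real (\<tau> j \<omega>) \<noteq> 0"
    proof (intro AE_finite_allI AE_tau)
      show "AE u in uniform01. 0 \<le> u \<and> u \<le> 1 \<and> 1 - z * complex_of_real u \<noteq> 0"
        using AE_uniform01_interior AE_uniform01_ne_zero[of z] by eventually_elim auto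
    qed auto
    then show "AE \<omega> in M. \<omega> \<in> {\<omega> \<in> space M. 1 \<le> G \<omega>} \<longrightarrow> \<omega> \<in> {\<omega> \<in> space M. 1 / 2 < cmod (V \<tau> z k \<omega>)}"
    proof eventually_elim
      case (elim \<omega>)
      have "G \<omega> \<le> (\<Prod>j\<in>{1..k}. cmod (stab_factor z (\<tau> j \<omega>)))"
        unfolding G_def using elim assms(1)
        by (intro prod_mono) (auto intro: less_imp_le gain_minorant_pos gain_minorant_le_cmod_stab_factor)
      then show ?case
        by (auto simp: V_eq_prod_stab_factor prod_norm)
    qed
  qed simp
  finally show ?thesis .
qed

lemma not_in_R_SP:
  assumes "0 \<le> Re z"
  shows "z \<notin> R_SP M \<tau>"
proof
  assume "z \<in> R_SP M \<tau>"
  then have "(\<lambda>k. prob {\<omega> \<in> space M. 1 / 2 < cmod (V \<tau> z k \<omega>)}) \<longlonglongrightarrow> 0"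
    unfolding R_SP_def by (auto elim!: allE[of _ "1 / 2"])
  moreover have "\<forall>\<^sub>F k in sequentially. 1 / 2 \<le> prob {\<omega> \<in> space M. 1 / 2 < cmod (V \<tau> z k \<omega>)}"
    by (intro eventually_sequentiallyI[of 1] prob_cmod_V_gt_half_ge_half[OF assms])
  ultimately have "1 / 2 \<le> (0::real)"
    by (rule tendsto_lowerbound) simp
  then show False
    by simp
qed

lemma R_AS_subset_R_SP: "R_AS M \<tau> \<subseteq> R_SP M \<tau>"
  unfolding R_AS_def R_SP_def by (auto intro: tendsto_prob_norm_gt_if_AE_tendsto_zero)

lemma
  assumes "Re z \<le> 0" "0 \<le> s"
  shows integrable_cmod_V_powr: "integrable M (\<lambda>\<omega>. cmod (V \<tau> z k \<omega>) powr s)"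
    and expectation_cmod_V_powr:
      "expectation (\<lambda>\<omega>. cmod (V \<tau> z k \<omega>) powr s) =
        (integral\<^sup>L uniform01 (\<lambda>u. cmod (stab_factor z u) powr s)) ^ k"
proof -
  define W where "W j \<omega> = cmod (stab_factor z (\<tau> j \<omega>)) powr s" for j \<omega>
  have V_eq: "cmod (V \<tau> z k \<omega>) powr s = (\<Prod>j\<in>{1..k}. W j \<omega>)" for \<omega>
    unfolding V_eq_prod_stab_factor W_def by (simp add: prod_norm[symmetric] prod_powr_distrib)
  have indep_W: "indep_vars (\<lambda>_. borel) W {1..k}"
    unfolding W_def by (rule indep_vars_compose2[OF indep_vars_subset[OF indep]]) auto
  have int_W: "integrable M (W j)" and E_W: "expectation (W j) = integral\<^sup>L uniform01 (\<lambda>u. cmod (stab_factor z u) powr s)"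
    if "j \<in> {1..k}" for j
    using that expectation_tau[of j "\<lambda>u. cmod (stab_factor z u) powr s"]
      integrable_cmod_stab_factor_powr[OF assms] by (auto simp: W_def[abs_def])
  show "integrable M (\<lambda>\<omega>. cmod (V \<tau> z k \<omega>) powr s)"
    unfolding V_eq using indep_W int_W by (intro indep_vars_integrable) auto
  show "expectation (\<lambda>\<omega>. cmod (V \<tau> z k \<omega>) powr s) = (integral\<^sup>L uniform01 (\<lambda>u. cmod (stab_factor z u) powr s)) ^ k"
    unfolding V_eq using indep_W int_W by (subst indep_vars_lebesgue_integral) (auto simp: E_W)
qed

lemma in_R_AS:
  assumes "Re z < 0"
  shows "z \<in> R_AS M \<tau>"
proof -
  obtain s where s: "0 < s" and m: "integral\<^sup>L uniform01 (\<lambda>u. cmod (stab_factor z u) powr s) < 1"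
    using exists_moment_stab_factor_less_one[OF assms] by blast
  have "AE \<omega> in M. (\<lambda>k. cmod (V \<tau> z k \<omega>) powr s) \<longlonglongrightarrow> 0"
  proof (rule AE_tendsto_zero_if_expectation_geometric)
    show "integrable M (\<lambda>\<omega>. cmod (V \<tau> z k \<omega>) powr s)" for k
      using integrable_cmod_V_powr[of z s k] assms s by simp
    show "expectation (\<lambda>\<omega>. cmod (V \<tau> z k \<omega>) powr s) \<le> (integral\<^sup>L uniform01 (\<lambda>u. cmod (stab_factor z u) powr s)) ^ k" for k
      using expectation_cmod_V_powr[of z s k] assms s by simp
    show "0 \<le> integral\<^sup>L uniform01 (\<lambda>u. cmod (stab_factor z u) powr s)"
      by (rule integral_nonneg_AE) simp
    show "(\<lambda>\<omega>. cmod (V \<tau> z k \<omega>) powr s) \<in> borel_measurable M" for k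
      by measurable
  qed (use m in simp_all)
  then have "AE \<omega> in M. (\<lambda>k. V \<tau> z k \<omega>) \<longlonglongrightarrow> 0"
  proof eventually_elim
    case (elim \<omega>)
    then have "(\<lambda>k. (cmod (V \<tau> z k \<omega>) powr s) powr (1 / s)) \<longlonglongrightarrow> 0"
      using s by (intro tendsto_zero_powrI[OF elim tendsto_const]) auto
    then have "(\<lambda>k. cmod (V \<tau> z k \<omega>)) \<longlonglongrightarrow> 0"
      using s by (simp add: powr_powr)
    then show ?case
      by (simp add: tendsto_norm_zero_iff)
  qed
  then show ?thesis
    by (simp add: R_AS_def)
qed

lemma expectation_ln_cmod_factor_tau1:
  "expectation (\<lambda>\<omega>. ln (cmod (1 + z / (1 - z * complex_of_real (\<tau> 1 \<omega>))))) = integral\<^sup>L uniform01 (log_gain z)"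
  using expectation_tau(1)[of 1 "log_gain z"] by (simp add: log_gain_def stab_factor_def)

lemma R_SP_eq_left_half_plane: "R_SP M \<tau> = {z. Re z < 0}"
proof (intro set_eqI iffI)
  fix z assume "z \<in> R_SP M \<tau>"
  then show "z \<in> {z. Re z < 0}"
    using not_in_R_SP[of z] by (cases "Re z < 0") auto
qed (use in_R_AS R_AS_subset_R_SP in blast)

lemma R_AS_eq_left_half_plane: "R_AS M \<tau> = {z. Re z < 0}"
  using in_R_AS R_AS_subset_R_SP R_SP_eq_left_half_plane by blast

end

theorem fact7:
  fixes M :: "'a measure" and \<tau> :: "nat \<Rightarrow> 'a \<Rightarrow> real"
  assumes "prob_space M"
    and "prob_space.indep_vars M (\<lambda>_. borel) \<tau> {1..}"
    and "\<And>j. j \<ge> 1 \<Longrightarrow> \<tau> j \<in> borel_measurable M"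
    and "\<And>j. j \<ge> 1 \<Longrightarrow> distr M lborel (\<tau> j) = uniform_measure lborel {0..1}"
  shows "R_AS M \<tau> = R_SP M \<tau>
    \<and> R_SP M \<tau> = {z. prob_space.expectation M
          (\<lambda>\<omega>. ln (cmod (1 + z / (1 - z * complex_of_real (\<tau> 1 \<omega>))))) < 0}
    \<and> {z. prob_space.expectation M
          (\<lambda>\<omega>. ln (cmod (1 + z / (1 - z * complex_of_real (\<tau> 1 \<omega>))))) < 0}
        = {z. Re z < 0}"
proof -
  interpret prob_space M
    by (fact assms(1))
  interpret iid_uniform01 M \<tau>
    using assms(2-4) by unfold_locales (simp_all flip: distr_lborel_eq_distr_borel)
  show ?thesis
    unfolding expectation_ln_cmod_factor_tau1 integral_log_gain_neg_iff
    using R_AS_eq_left_half_plane R_SP_eq_left_half_plane by simp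
qed

end
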